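(* For each integer $k\ge0$ there is a polynomial $E_k(d)\in\mathbb{Q}[d]$ of degree $k$ such that $\mathbb{E}[\mathcal{X}_d^k]=E_k(d)$ for all integers $d\ge k-1$, $d\ge0$. These polynomials satisfy the formal power series identity (in $z$, for every $d$) \[ \sum_{k\ge0}\frac{E_k(d)}{k!}z^k=\Big(\frac{e^z-1}{z}\Big)^{d+2}e^{-z}. \] In particular, setting $E'_k(d)=\sum_{i=0}^k\binom{k}{i}E_i(d)\big(-\tfrac d2\big)^{k-i}$, one has for all integers $a,b\ge0$ and $k\ge0$ \[ E'_k(a+b+2)=\sum_{i+j=k}\binom{k}{i}E'_i(a)E'_j(b). \]
   Context: $\mathcal{X}_d$ is the random variable equal to the number of descents of a uniformly random permutation of $\{1,\dots,d+1\}$ (equivalently, the random variable with $\Pr(\mathcal{X}_d=k)=a_k/\sum_i a_i$ where $a_k=\dim A^k$ of the Chow ring of the Boolean matroid on $d+1$ elements, these being Eulerian numbers). *)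

theory Defs
  imports "HOL-Combinatorics.Permutations" "HOL-Computational_Algebra.Polynomial"
    "HOL-Computational_Algebra.Formal_Power_Series"
begin

definition descents :: "nat \<Rightarrow> (nat \<Rightarrow> nat) \<Rightarrow> nat" where
  "descents n p = card {i \<in> {1..<n}. p (Suc i) < p i}"

text \<open>k-th moment of X_d: the number of descents of a uniformly random
  permutation of {1..d+1}.\<close>
definition moment_X :: "nat \<Rightarrow> nat \<Rightarrow> rat" where
  "moment_X k d = (\<Sum>p\<in>{p. p permutes {1..d+1}}. of_nat (descents (d+1) p) ^ k)
                  / of_nat (card {p. p permutes {1..d+1}})"

definition Eprime :: "(nat \<Rightarrow> rat poly) \<Rightarrow> nat \<Rightarrow> rat \<Rightarrow> rat" where
  "Eprime E k x = (\<Sum>i\<le>k. of_nat (k choose i) * poly (E i) x * (- x / 2) ^ (k - i))"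

end

theory Submission
  imports Defs
begin

(* Inserting the value n+1 into the one-line notation of a permutation of {1..n} at each of the
   n+1 possible positions keeps its number D of descents in D+1 cases and raises it by one in the
   other n-D.  So the power sums T n k of descents over the permutations of {1..n} satisfy
   T (n+1) k = sum over p of (D+1) D^k + (n-D) (D+1)^k, which by the binomial theorem is a linear
   recurrence in T n 0, ..., T n k.  The differential equation z U' = e^z - U of U = (e^z-1)/z shows
   that the numbers (d+1)! k! [z^k] U^(d+2) e^(-z) satisfy the same recurrence.  Two sequences that
   agree below k produce values at k differing by (1 + n - k) times their difference at k, and this
   factor vanishes exactly for k = n+1; hence the two agree precisely for k <= d+1.
   Polynomiality in d follows from U^N = sum over m of binom(N,m) (U-1)^m with (U-1)^m = O(z^m).
   Finally E'_k(N) is the k-th exponential coefficient of U^(N+2) e^(-z) e^(-N z/2) =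
   (U e^(-z/2))^(N+2), so the addition formula is the binomial convolution of exponential
   generating functions applied to (U e^(-z/2))^(a+2) (U e^(-z/2))^(b+2). *)

section \<open>Exponential generating functions\<close>

definition egf_coeff :: "'a::field_char_0 fps \<Rightarrow> nat \<Rightarrow> 'a" where
  "egf_coeff A k = fact k * fps_nth A k"

lemma Abs_fps_egf_coeff: "Abs_fps (\<lambda>k. egf_coeff A k / fact k) = (A :: 'a::field_char_0 fps)"
  by (simp add: egf_coeff_def fps_eq_iff)

lemma egf_coeff_add: "egf_coeff (A + B) k = egf_coeff A k + egf_coeff B k"
  by (simp add: egf_coeff_def algebra_simps)

lemma egf_coeff_diff: "egf_coeff (A - B) k = egf_coeff A k - egf_coeff B k"
  by (simp add: egf_coeff_def algebra_simps)

lemma egf_coeff_of_nat_mult: "egf_coeff (of_nat n * A) k = of_nat n * egf_coeff A k"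
  by (simp add: egf_coeff_def fps_of_nat [symmetric] mult.left_commute)

lemma egf_coeff_deriv: "egf_coeff (fps_deriv A) k = egf_coeff A (Suc k)"
  by (simp add: egf_coeff_def fps_deriv_nth)

lemma egf_coeff_exp: "egf_coeff (fps_exp c) k = (c :: 'a::field_char_0) ^ k"
  by (simp add: egf_coeff_def)

lemma egf_coeff_mult:
  fixes A B :: "'a::field_char_0 fps"
  shows "egf_coeff (A * B) k
    = (\<Sum>i\<le>k. of_nat (k choose i) * egf_coeff A i * egf_coeff B (k - i))"
proof -
  have "egf_coeff (A * B) k = (\<Sum>i\<le>k. fact k * (fps_nth A i * fps_nth B (k - i)))"
    by (simp add: egf_coeff_def fps_mult_nth atLeast0AtMost sum_distrib_left)
  also have "\<dots> = (\<Sum>i\<le>k. of_nat (k choose i) * egf_coeff A i * egf_coeff B (k - i))"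
    by (intro sum.cong refl) (simp add: egf_coeff_def binomial_fact)
  finally show ?thesis .
qed

lemma egf_coeff_mult_exp:
  fixes A :: "'a::field_char_0 fps"
  shows "egf_coeff (A * fps_exp c) k = (\<Sum>i\<le>k. of_nat (k choose i) * egf_coeff A i * c ^ (k - i))"
  by (simp add: egf_coeff_mult egf_coeff_exp)

section \<open>Coefficients of powers of a power series\<close>

definition gbinomial_poly :: "nat \<Rightarrow> 'a::field_char_0 poly" where
  "gbinomial_poly m = smult (1 / fact m) (\<Prod>i<m. [:- of_nat i, 1:])"

lemma poly_gbinomial_poly: "poly (gbinomial_poly m) x = x gchoose m"
  by (simp add: gbinomial_poly_def poly_prod gbinomial_prod_rev atLeast0LessThan)

lemma degree_gbinomial_poly: "degree (gbinomial_poly m :: 'a::field_char_0 poly) = m"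
  by (simp add: gbinomial_poly_def degree_prod_sum_eq)

lemma lead_coeff_gbinomial_poly: "lead_coeff (gbinomial_poly m :: 'a::field_char_0 poly) = 1 / fact m"
  by (simp add: gbinomial_poly_def lead_coeff_prod)

definition fps_power_coeff_poly :: "'a::field_char_0 fps \<Rightarrow> 'a fps \<Rightarrow> nat \<Rightarrow> 'a poly" where
  "fps_power_coeff_poly A B k = (\<Sum>m\<le>k. smult (fps_nth ((A - 1) ^ m * B) k) (gbinomial_poly m))"

lemma fps_minus_one_eq_X_mult_shift:
  fixes A :: "'a::comm_ring_1 fps"
  shows "fps_nth A 0 = 1 \<Longrightarrow> A - 1 = fps_X * fps_shift 1 A"
  by (rule fps_ext) (simp add: fps_X_mult_nth)

lemma fps_nth_power_minus_one_mult:
  fixes A B :: "'a::comm_ring_1 fps"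
  assumes "fps_nth A 0 = 1"
  shows "fps_nth ((A - 1) ^ m * B) k = (if k < m then 0 else fps_nth (fps_shift 1 A ^ m * B) (k - m))"
  unfolding fps_minus_one_eq_X_mult_shift [OF assms] power_mult_distrib mult.assoc
  by (rule fps_X_power_mult_nth)

lemma poly_fps_power_coeff_poly:
  fixes A B :: "'a::field_char_0 fps"
  assumes "fps_nth A 0 = 1"
  shows "poly (fps_power_coeff_poly A B k) (of_nat N) = fps_nth (A ^ N * B) k"
proof -
  define c where "c m = of_nat (N choose m) * fps_nth ((A - 1) ^ m * B) k" for m
  have "A ^ N * B = (\<Sum>m\<le>N. of_nat (N choose m) * ((A - 1) ^ m * B))"
    using binomial_ring [of "A - 1" 1 N] by (simp add: sum_distrib_right mult.assoc)
  then have "fps_nth (A ^ N * B) k = (\<Sum>m\<le>N. c m)"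
    by (simp add: c_def fps_sum_nth fps_of_nat [symmetric])
  also have "\<dots> = (\<Sum>m\<le>N + k. c m)"
    by (rule sum.mono_neutral_left) (auto simp: c_def)
  also have "\<dots> = (\<Sum>m\<le>k. c m)"
    by (rule sum.mono_neutral_right) (auto simp: c_def fps_nth_power_minus_one_mult [OF assms])
  also have "\<dots> = poly (fps_power_coeff_poly A B k) (of_nat N)"
    by (simp add: c_def fps_power_coeff_poly_def poly_sum poly_gbinomial_poly binomial_gbinomial
        mult.commute)
  finally show ?thesis ..
qed

lemma coeff_fps_power_coeff_poly_top:
  fixes A B :: "'a::field_char_0 fps"
  assumes "fps_nth A 0 = 1"
  shows "coeff (fps_power_coeff_poly A B k) k = fps_nth A 1 ^ k * fps_nth B 0 / fact k"
proof -
  have "coeff (gbinomial_poly m :: 'a poly) k = 0" if "m < k" for m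
    using that by (simp add: coeff_eq_0 degree_gbinomial_poly)
  then have "coeff (fps_power_coeff_poly A B k) k
      = fps_nth ((A - 1) ^ k * B) k * lead_coeff (gbinomial_poly k :: 'a poly)"
    by (simp add: fps_power_coeff_poly_def coeff_sum lessThan_Suc_atMost [symmetric]
        degree_gbinomial_poly)
  also have "\<dots> = fps_nth A 1 ^ k * fps_nth B 0 / fact k"
    by (simp add: fps_nth_power_minus_one_mult [OF assms] lead_coeff_gbinomial_poly fps_nth_power_0)
  finally show ?thesis .
qed

lemma degree_fps_power_coeff_poly:
  fixes A B :: "'a::field_char_0 fps"
  assumes "fps_nth A 0 = 1" "fps_nth A 1 \<noteq> 0" "fps_nth B 0 \<noteq> 0"
  shows "degree (fps_power_coeff_poly A B k) = k"
proof (rule antisym)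
  show "degree (fps_power_coeff_poly A B k) \<le> k"
    unfolding fps_power_coeff_poly_def
    by (intro degree_sum_le)
      (auto intro: order.trans [OF degree_smult_le] simp: degree_gbinomial_poly)
  show "k \<le> degree (fps_power_coeff_poly A B k)"
    using assms by (intro le_degree) (simp add: coeff_fps_power_coeff_poly_top)
qed

section \<open>Descents and insertion of the maximum\<close>

lemma sum_atLeastLessThan_split:
  assumes "a \<le> s" "s < m"
  shows "(\<Sum>i\<in>{a..<m}. f i) = (\<Sum>i\<in>{a..<s}. f i) + f s + (\<Sum>i\<in>{Suc s..<m}. f i)"
proof -
  have "(\<Sum>i\<in>{a..<m}. f i) = (\<Sum>i\<in>{a..<s}. f i) + (\<Sum>i\<in>{s..<m}. f i)"
    using assms by (simp add: sum.atLeastLessThan_concat)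
  also have "(\<Sum>i\<in>{s..<m}. f i) = f s + (\<Sum>i\<in>{Suc s..<m}. f i)"
    using assms(2) by (rule sum.atLeast_Suc_lessThan)
  finally show ?thesis by (simp add: add.assoc)
qed

definition descent_at :: "(nat \<Rightarrow> nat) \<Rightarrow> nat \<Rightarrow> nat" where
  "descent_at p i = (if p (Suc i) < p i then 1 else 0)"

lemma descents_eq_sum_descent_at: "descents n p = (\<Sum>i\<in>{1..<n}. descent_at p i)"
  unfolding descents_def descent_at_def by (simp add: sum.inter_filter [symmetric])

definition insert_top :: "nat \<Rightarrow> (nat \<Rightarrow> nat) \<Rightarrow> nat \<Rightarrow> nat \<Rightarrow> nat" where
  "insert_top n p r i =
     (if i < r then p i else if i = r then Suc n else if i \<le> Suc n then p (i - 1) else i)"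

lemma insert_top_at [simp]: "insert_top n p r r = Suc n"
  by (simp add: insert_top_def)

lemma insert_top_other:
  "i \<noteq> r \<Longrightarrow> i \<le> Suc n \<Longrightarrow> insert_top n p r i = p (if i < r then i else i - 1)"
  by (simp add: insert_top_def)

lemma insert_top_in_range:
  assumes p: "p permutes {1..n}" and "r \<in> {1..Suc n}" "i \<in> {1..Suc n}" "i \<noteq> r"
  shows "insert_top n p r i \<in> {1..n}"
proof (cases "i < r")
  case True
  then have "i \<in> {1..n}" using assms by auto
  then show ?thesis using True permutes_in_image [OF p] by (simp add: insert_top_def)
next
  case False
  then have "i - 1 \<in> {1..n}" using assms by auto
  then show ?thesis using False assms permutes_in_image [OF p] by (simp add: insert_top_def)
qed

lemma insert_top_eq_top_iff:
  assumes "p permutes {1..n}" "r \<in> {1..Suc n}" "i \<in> {1..Suc n}"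
  shows "insert_top n p r i = Suc n \<longleftrightarrow> i = r"
  using insert_top_in_range [OF assms] by (auto simp: insert_top_def)

lemma inj_on_insert_top:
  assumes p: "p permutes {1..n}" and r: "r \<in> {1..Suc n}"
  shows "inj_on (insert_top n p r) {1..Suc n}"
proof (rule inj_onI)
  fix i j assume i: "i \<in> {1..Suc n}" and j: "j \<in> {1..Suc n}"
    and eq: "insert_top n p r i = insert_top n p r j"
  show "i = j"
  proof (cases "i = r \<or> j = r")
    case True
    then show ?thesis
      using eq insert_top_eq_top_iff [OF p r i] insert_top_eq_top_iff [OF p r j] by metis
  next
    case False
    then have "p (if i < r then i else i - 1) = p (if j < r then j else j - 1)"
      using eq i j False insert_top_other [of i r n p] insert_top_other [of j r n p] by simp
    then have "(if i < r then i else i - 1) = (if j < r then j else j - 1)"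
      by (rule injD [OF permutes_inj [OF p]])
    with False i j show ?thesis
      by (cases "i < r"; cases "j < r") auto
  qed
qed

lemma permutes_insert_top:
  assumes p: "p permutes {1..n}" and r: "r \<in> {1..Suc n}"
  shows "insert_top n p r permutes {1..Suc n}"
proof (rule bij_imp_permutes)
  have "insert_top n p r i \<in> {1..Suc n}" if "i \<in> {1..Suc n}" for i
    using insert_top_in_range [OF p r that] by (cases "i = r") auto
  then have "insert_top n p r ` {1..Suc n} \<subseteq> {1..Suc n}"
    by blast
  then show "bij_betw (insert_top n p r) {1..Suc n} {1..Suc n}"
    using inj_on_insert_top [OF p r] endo_inj_surj [of "{1..Suc n}"] by (simp add: bij_betw_def)
  show "insert_top n p r i = i" if "i \<notin> {1..Suc n}" for i
    using that r permutes_not_in [OF p, of i] by (auto simp: insert_top_def)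
qed

lemma inj_on_insert_top_pair:
  "inj_on (\<lambda>(p, r). insert_top n p r) ({p. p permutes {1..n}} \<times> {1..Suc n})"
proof (rule inj_onI, clarify)
  fix p r p' r'
  assume p: "p permutes {1..n}" and p': "p' permutes {1..n}"
    and r: "r \<in> {1..Suc n}" and r': "r' \<in> {1..Suc n}"
    and eq: "insert_top n p r = insert_top n p' r'"
  have "insert_top n p' r' r = Suc n"
    by (metis eq insert_top_at)
  then have "r = r'"
    using insert_top_eq_top_iff [OF p' r' r] by simp
  moreover have "p i = p' i" for i
  proof -
    consider "i < r" | "r \<le> i" "i \<le> n" | "n < i"
      by linarith
    then show ?thesis
    proof cases
      case 1
      then show ?thesis using fun_cong [OF eq, of i] \<open>r = r'\<close> by (simp add: insert_top_def)
    next
      case 2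
      then show ?thesis using fun_cong [OF eq, of "Suc i"] \<open>r = r'\<close> by (simp add: insert_top_def)
    next
      case 3
      then show ?thesis using permutes_not_in [OF p] permutes_not_in [OF p'] by simp
    qed
  qed
  ultimately show "p = p' \<and> r = r'" by auto
qed

lemma bij_betw_insert_top:
  "bij_betw (\<lambda>(p, r). insert_top n p r)
     ({p. p permutes {1..n}} \<times> {1..Suc n}) {q. q permutes {1..Suc n}}"
proof -
  let ?f = "\<lambda>(p, r). insert_top n p r"
  let ?A = "{p. p permutes {1..n}} \<times> {1..Suc n}" and ?B = "{q. q permutes {1..Suc n}}"
  have "?f ` ?A \<subseteq> ?B" using permutes_insert_top by auto
  moreover have "card (?f ` ?A) = card ?B"
    unfolding card_image [OF inj_on_insert_top_pair]
    by (simp add: card_cartesian_product card_permutations)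
  ultimately have "?f ` ?A = ?B" by (intro card_subset_eq) (simp_all add: finite_permutations)
  with inj_on_insert_top_pair show ?thesis by (simp add: bij_betw_def)
qed

lemma descent_at_insert_top:
  assumes p: "p permutes {1..n}" and "r \<le> Suc n" "1 \<le> i" "i \<le> n"
  shows "descent_at (insert_top n p r) i =
    (if Suc i < r then descent_at p i else if Suc i = r then 0
     else if i = r then 1 else descent_at p (i - 1))"
proof -
  have "p i \<le> n"
    using permutes_in_image [OF p, of i] assms by auto
  then show ?thesis
    using assms by (auto simp: descent_at_def insert_top_def)
qed

lemma descents_insert_top:
  assumes p: "p permutes {1..n}" and n: "1 \<le> n" and r: "1 \<le> r" "r \<le> Suc n"
  shows "descents (Suc n) (insert_top n p r) + (if 2 \<le> r \<and> r \<le> n then descent_at p (r - 1) else 0)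
       = descents n p + (if r \<le> n then 1 else 0)"
proof -
  let ?q = "insert_top n p r"
  note dq = descent_at_insert_top [OF p r(2)]
  have shift: "(\<Sum>i\<in>{Suc a..<Suc n}. descent_at ?q i) = (\<Sum>i\<in>{a..<n}. descent_at p i)"
    if "r \<le> a" for a
    unfolding sum.shift_bounds_Suc_ivl
    by (rule sum.cong) (use that dq in auto)
  consider "r = 1" | "r = Suc n" | "2 \<le> r" "r \<le> n"
    using r by linarith
  then show ?thesis
  proof cases
    case 1
    have "descents (Suc n) ?q = descent_at ?q 1 + (\<Sum>i\<in>{Suc 1..<Suc n}. descent_at ?q i)"
      unfolding descents_eq_sum_descent_at using n by (intro sum.atLeast_Suc_lessThan) simp
    also have "(\<Sum>i\<in>{Suc 1..<Suc n}. descent_at ?q i) = descents n p"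
      unfolding descents_eq_sum_descent_at by (rule shift) (use 1 in simp)
    also have "descent_at ?q 1 = 1"
      using dq [of 1] n 1 by simp
    finally show ?thesis using 1 n by simp
  next
    case 2
    have "descents (Suc n) ?q = (\<Sum>i\<in>{1..<n}. descent_at ?q i) + descent_at ?q n"
      using n by (simp add: descents_eq_sum_descent_at)
    also have "(\<Sum>i\<in>{1..<n}. descent_at ?q i) = descents n p"
      unfolding descents_eq_sum_descent_at by (rule sum.cong) (use 2 dq in auto)
    also have "descent_at ?q n = 0"
      using dq [of n] n 2 by simp
    finally show ?thesis using 2 by simp
  next
    case 3
    define s where "s = r - 1"
    have s: "1 \<le> s" "s < n" "r = Suc s"
      using 3 by (auto simp: s_def)
    have "descents (Suc n) ?q = (\<Sum>i\<in>{1..<s}. descent_at ?q i) + descent_at ?q s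
        + (\<Sum>i\<in>{Suc s..<Suc n}. descent_at ?q i)"
      unfolding descents_eq_sum_descent_at by (rule sum_atLeastLessThan_split) (use s in auto)
    also have "(\<Sum>i\<in>{Suc s..<Suc n}. descent_at ?q i)
        = descent_at ?q (Suc s) + (\<Sum>i\<in>{Suc (Suc s)..<Suc n}. descent_at ?q i)"
      by (rule sum.atLeast_Suc_lessThan) (use s in simp)
    also have "(\<Sum>i\<in>{Suc (Suc s)..<Suc n}. descent_at ?q i) = (\<Sum>i\<in>{Suc s..<n}. descent_at p i)"
      by (rule shift) (use s in simp)
    also have "(\<Sum>i\<in>{1..<s}. descent_at ?q i) = (\<Sum>i\<in>{1..<s}. descent_at p i)"
      by (rule sum.cong) (use s dq in auto)
    also have "descent_at ?q s = 0"
      using s dq [of s] by simp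
    also have "descent_at ?q (Suc s) = 1"
      using s dq [of "Suc s"] by simp
    moreover have "descents n p = (\<Sum>i\<in>{1..<s}. descent_at p i) + descent_at p s
        + (\<Sum>i\<in>{Suc s..<n}. descent_at p i)"
      unfolding descents_eq_sum_descent_at by (rule sum_atLeastLessThan_split) (use s in auto)
    ultimately show ?thesis using s by simp
  qed
qed

lemma sum_insert_top_descents:
  fixes f :: "nat \<Rightarrow> 'a::comm_ring_1"
  assumes p: "p permutes {1..n}" and n: "1 \<le> n"
  defines "D \<equiv> descents n p"
  shows "(\<Sum>r\<in>{1..Suc n}. f (descents (Suc n) (insert_top n p r)))
     = (of_nat D + 1) * f D + (of_nat n - of_nat D) * f (Suc D)"
proof -
  let ?g = "\<lambda>r. f (descents (Suc n) (insert_top n p r))"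
  have "{1..Suc n} = insert 1 (insert (Suc n) {Suc 1..<Suc n})"
    using n by auto
  then have "(\<Sum>r\<in>{1..Suc n}. ?g r) = ?g 1 + ?g (Suc n) + (\<Sum>r\<in>{Suc 1..<Suc n}. ?g r)"
    using n by (simp add: add.assoc del: sum.op_ivl_Suc)
  also have "(\<Sum>r\<in>{Suc 1..<Suc n}. ?g r) = (\<Sum>i\<in>{1..<n}. ?g (Suc i))"
    by (rule sum.shift_bounds_Suc_ivl)
  also have "?g 1 = f (Suc D)"
    using descents_insert_top [OF p n, of 1] n by (simp add: D_def)
  also have "?g (Suc n) = f D"
    using descents_insert_top [OF p n, of "Suc n"] by (simp add: D_def)
  also have "(\<Sum>i\<in>{1..<n}. ?g (Suc i))
      = (\<Sum>i\<in>{1..<n}. of_nat (descent_at p i) * f D + (1 - of_nat (descent_at p i)) * f (Suc D))"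
  proof (rule sum.cong)
    fix i assume "i \<in> {1..<n}"
    then have "descents (Suc n) (insert_top n p (Suc i)) + descent_at p i = Suc D"
      using descents_insert_top [OF p n, of "Suc i"] by (simp add: D_def)
    then show "?g (Suc i) = of_nat (descent_at p i) * f D + (1 - of_nat (descent_at p i)) * f (Suc D)"
      by (cases "descent_at p i = 0") (auto simp: descent_at_def split: if_splits)
  qed simp
  also have "\<dots> = of_nat D * f D + (of_nat (n - 1) - of_nat D) * f (Suc D)"
  proof -
    have "(\<Sum>i\<in>{1..<n}. (of_nat (descent_at p i) :: 'a)) = of_nat D"
      by (simp add: D_def descents_eq_sum_descent_at)
    then show ?thesis
      using n by (simp only: sum.distrib sum_distrib_right [symmetric] sum_subtractf) simp
  qed
  finally show ?thesis
    using n by (simp add: of_nat_diff algebra_simps)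
qed

lemma sum_permutes_Suc_descents:
  fixes f :: "nat \<Rightarrow> 'a::comm_ring_1"
  assumes "1 \<le> n"
  shows "(\<Sum>q\<in>{q. q permutes {1..Suc n}}. f (descents (Suc n) q))
     = (\<Sum>p\<in>{p. p permutes {1..n}}. (of_nat (descents n p) + 1) * f (descents n p)
          + (of_nat n - of_nat (descents n p)) * f (Suc (descents n p)))"
proof -
  have "(\<Sum>q\<in>{q. q permutes {1..Suc n}}. f (descents (Suc n) q))
     = (\<Sum>x\<in>{p. p permutes {1..n}} \<times> {1..Suc n}.
          f (descents (Suc n) ((\<lambda>(p, r). insert_top n p r) x)))"
    by (rule sum.reindex_bij_betw [OF bij_betw_insert_top, symmetric])
  also have "\<dots> = (\<Sum>p\<in>{p. p permutes {1..n}}. \<Sum>r\<in>{1..Suc n}. f (descents (Suc n) (insert_top n p r)))"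
    by (simp only: sum.cartesian_product split_def)
  also have "\<dots> = (\<Sum>p\<in>{p. p permutes {1..n}}. (of_nat (descents n p) + 1) * f (descents n p)
          + (of_nat n - of_nat (descents n p)) * f (Suc (descents n p)))"
    using assms by (intro sum.cong refl sum_insert_top_descents) auto
  finally show ?thesis .
qed

section \<open>Moments of descents\<close>

definition moment_step :: "nat \<Rightarrow> (nat \<Rightarrow> 'a) \<Rightarrow> nat \<Rightarrow> 'a::comm_ring_1" where
  "moment_step n x k = x k + of_nat n * (\<Sum>i\<le>k. of_nat (k choose i) * x i)
     - (\<Sum>i<k. of_nat (k choose i) * x (Suc i))"

lemma moment_step_power:
  fixes x :: "'a::comm_ring_1"
  shows "moment_step n (\<lambda>i. x ^ i) k = (x + 1) * x ^ k + (of_nat n - x) * (x + 1) ^ k"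
proof -
  have binomial: "(x + 1) ^ k = (\<Sum>i\<le>k. of_nat (k choose i) * x ^ i)"
    using binomial_ring [of x 1 k] by simp
  have "x * (x + 1) ^ k = (\<Sum>i<k. of_nat (k choose i) * x ^ Suc i) + x ^ Suc k"
    unfolding binomial
    by (simp add: sum_distrib_left algebra_simps lessThan_Suc_atMost [symmetric])
  then show ?thesis
    unfolding moment_step_def binomial [symmetric] by (simp add: algebra_simps)
qed

lemma moment_step_sum:
  "moment_step n (\<lambda>i. \<Sum>a\<in>A. x a i) k = (\<Sum>a\<in>A. moment_step n (x a) k)"
  by (simp add: moment_step_def sum.distrib sum_subtractf sum_distrib_left sum.swap [of _ A])

lemma moment_step_mult_const: "moment_step n (\<lambda>i. c * x i) k = c * moment_step n x k"
  by (simp add: moment_step_def sum_distrib_left algebra_simps)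

lemma moment_step_diff:
  assumes "\<And>j. j < k \<Longrightarrow> x j = y j"
  shows "moment_step n x k - moment_step n y k = (1 + of_nat n - of_nat k) * (x k - y k)"
proof (cases k)
  case 0
  then show ?thesis by (simp add: moment_step_def algebra_simps)
next
  case (Suc m)
  have split: "moment_step n z k = z k + of_nat n * ((\<Sum>i\<le>m. of_nat (k choose i) * z i) + z k)
      - ((\<Sum>i<m. of_nat (k choose i) * z (Suc i)) + of_nat k * z k)" for z :: "nat \<Rightarrow> 'a"
    unfolding moment_step_def Suc by (simp add: binomial_Suc_n)
  have "(\<Sum>i\<le>m. of_nat (k choose i) * x i) = (\<Sum>i\<le>m. of_nat (k choose i) * y i)"
    "(\<Sum>i<m. of_nat (k choose i) * x (Suc i)) = (\<Sum>i<m. of_nat (k choose i) * y (Suc i))"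
    using assms Suc by (auto intro!: sum.cong)
  then show ?thesis
    unfolding split [of x] split [of y] by (simp add: algebra_simps)
qed

definition descent_power_sum :: "nat \<Rightarrow> nat \<Rightarrow> rat" where
  "descent_power_sum n k = (\<Sum>p\<in>{p. p permutes {1..n}}. of_nat (descents n p) ^ k)"

lemma descent_power_sum_one: "descent_power_sum 1 k = 0 ^ k"
proof -
  have "{p. p permutes {1..1::nat}} = {id}"
    by auto
  then show ?thesis
    by (simp add: descent_power_sum_def descents_def)
qed

lemma descent_power_sum_Suc:
  assumes "1 \<le> n"
  shows "descent_power_sum (Suc n) k = moment_step n (descent_power_sum n) k"
proof -
  have "descent_power_sum (Suc n) k = (\<Sum>p\<in>{p. p permutes {1..n}}.
      (of_nat (descents n p) + 1) * of_nat (descents n p) ^ k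
      + (of_nat n - of_nat (descents n p)) * (of_nat (descents n p) + 1) ^ k)"
    unfolding descent_power_sum_def
    using sum_permutes_Suc_descents [OF assms, of "\<lambda>d. (of_nat d :: rat) ^ k"]
    by (simp add: add.commute)
  also have "\<dots> = (\<Sum>p\<in>{p. p permutes {1..n}}. moment_step n (\<lambda>i. of_nat (descents n p) ^ i) k)"
    by (simp only: moment_step_power)
  also have "\<dots> = moment_step n (descent_power_sum n) k"
    unfolding descent_power_sum_def moment_step_sum ..
  finally show ?thesis .
qed

section \<open>The exponential generating function of the moments\<close>

definition expm1_quot :: "rat fps" where
  "expm1_quot = (fps_exp 1 - 1) / fps_X"

lemma fps_nth_expm1_quot: "fps_nth expm1_quot n = 1 / fact (Suc n)"
  by (simp add: expm1_quot_def algebra_simps)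

lemma fps_X_mult_expm1_quot: "fps_X * expm1_quot = fps_exp 1 - 1"
  by (rule fps_ext) (simp add: fps_X_mult_nth fps_nth_expm1_quot)

lemma fps_X_mult_deriv_expm1_quot: "fps_X * fps_deriv expm1_quot = fps_exp 1 - expm1_quot"
proof -
  have "fps_deriv (fps_X * expm1_quot) = fps_deriv (fps_exp 1 - 1)"
    by (simp only: fps_X_mult_expm1_quot)
  then show ?thesis
    by (simp add: algebra_simps)
qed

definition moment_egf :: "nat \<Rightarrow> rat fps" where
  "moment_egf d = expm1_quot ^ (d + 2) * fps_exp (-1)"

lemma moment_egf_Suc:
  "of_nat (d + 2) * moment_egf (Suc d)
     = (1 + of_nat (d + 1) * fps_exp 1) * moment_egf d + (1 - fps_exp 1) * fps_deriv (moment_egf d)"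
proof -
  let ?U = expm1_quot and ?E = "fps_exp (1::rat)" and ?G = "moment_egf d"
  have "fps_deriv (?U ^ (d + 2)) = of_nat (d + 2) * fps_deriv ?U * ?U ^ Suc d"
    using fps_deriv_power' [of ?U "d + 2"] by simp
  then have deriv: "fps_deriv ?G = of_nat (d + 2) * fps_deriv ?U * ?U ^ Suc d * fps_exp (-1) - ?G"
    by (simp add: moment_egf_def fps_const_neg [symmetric])
  have "(1 - ?E) * fps_deriv ?G = - (fps_X * ?U) * fps_deriv ?G"
    by (simp add: fps_X_mult_expm1_quot)
  also have "\<dots> = (fps_X * ?U) * ?G - of_nat (d + 2) * (fps_X * fps_deriv ?U) * ?G"
    unfolding deriv by (simp add: moment_egf_def algebra_simps)
  also have "\<dots> = (?E - 1) * ?G - of_nat (d + 2) * (?E - ?U) * ?G"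
    by (simp only: fps_X_mult_expm1_quot fps_X_mult_deriv_expm1_quot)
  finally show ?thesis
    by (simp add: moment_egf_def algebra_simps)
qed

lemma egf_coeff_moment_egf_Suc:
  "of_nat (d + 2) * egf_coeff (moment_egf (Suc d)) k = moment_step (d + 1) (egf_coeff (moment_egf d)) k"
proof -
  let ?G = "moment_egf d" and ?E = "fps_exp (1::rat)"
  let ?e = "egf_coeff ?G"
  have "of_nat (d + 2) * egf_coeff (moment_egf (Suc d)) k
      = egf_coeff (?G + of_nat (d + 1) * (?G * ?E) + fps_deriv ?G - fps_deriv ?G * ?E) k"
    unfolding egf_coeff_of_nat_mult [symmetric] moment_egf_Suc by (simp add: algebra_simps)
  also have "\<dots> = ?e k + of_nat (d + 1) * (\<Sum>i\<le>k. of_nat (k choose i) * ?e i) + ?e (Suc k)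
      - (\<Sum>i\<le>k. of_nat (k choose i) * ?e (Suc i))"
    unfolding egf_coeff_add egf_coeff_diff egf_coeff_of_nat_mult egf_coeff_mult_exp egf_coeff_deriv
    by simp
  also have "(\<Sum>i\<le>k. of_nat (k choose i) * ?e (Suc i))
      = (\<Sum>i<k. of_nat (k choose i) * ?e (Suc i)) + ?e (Suc k)"
    by (simp add: lessThan_Suc_atMost [symmetric])
  finally show ?thesis
    by (simp add: moment_step_def)
qed

lemma descent_power_sum_eq_egf_coeff:
  "k \<le> d + 1 \<Longrightarrow> descent_power_sum (d + 1) k = fact (d + 1) * egf_coeff (moment_egf d) k"
proof (induction d arbitrary: k)
  case 0
  then consider "k = 0" | "k = 1"
    by linarith
  then show ?case
    using descent_power_sum_one [of k]
    by cases (simp_all add: egf_coeff_def moment_egf_def fps_mult_nth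
        fps_nth_expm1_quot power2_eq_square)
next
  case (Suc d)
  let ?x = "descent_power_sum (d + 1)" and ?y = "\<lambda>i. fact (d + 1) * egf_coeff (moment_egf d) i"
  have "moment_step (d + 1) ?x k - moment_step (d + 1) ?y k
      = (1 + of_nat (d + 1) - of_nat k) * (?x k - ?y k)"
    using Suc by (intro moment_step_diff) simp
  also have "\<dots> = 0"
    \<comment> \<open>for k = d + 2, the one case beyond the induction hypothesis, the factor vanishes\<close>
    using Suc by (cases "k \<le> d + 1") simp_all
  finally have same_step: "moment_step (d + 1) ?x k = moment_step (d + 1) ?y k"
    by simp
  have "descent_power_sum (Suc d + 1) k = moment_step (d + 1) ?x k"
    by (simp add: descent_power_sum_Suc)
  also have "\<dots> = fact (d + 1) * (of_nat (d + 2) * egf_coeff (moment_egf (Suc d)) k)"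
    unfolding same_step egf_coeff_moment_egf_Suc moment_step_mult_const ..
  also have "\<dots> = fact (Suc d + 1) * egf_coeff (moment_egf (Suc d)) k"
    by (simp add: algebra_simps)
  finally show ?case .
qed

lemma moment_X_eq_egf_coeff: "k \<le> d + 1 \<Longrightarrow> moment_X k d = egf_coeff (moment_egf d) k"
  using descent_power_sum_eq_egf_coeff [of k d]
  by (simp add: moment_X_def descent_power_sum_def card_permutations del: One_nat_def)

definition moment_poly :: "nat \<Rightarrow> rat poly" where
  "moment_poly k = smult (fact k) (fps_power_coeff_poly expm1_quot (expm1_quot ^ 2 * fps_exp (-1)) k)"

lemma poly_moment_poly: "poly (moment_poly k) (of_nat d) = egf_coeff (moment_egf d) k"
  unfolding moment_egf_def power_add mult.assoc
  by (simp add: moment_poly_def poly_fps_power_coeff_poly fps_nth_expm1_quot egf_coeff_def)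

lemma degree_moment_poly: "degree (moment_poly k) = k"
  by (simp add: moment_poly_def degree_fps_power_coeff_poly fps_nth_expm1_quot fps_nth_power_0)

lemma Eprime_moment_poly:
  "Eprime moment_poly k (of_nat N) = egf_coeff ((expm1_quot * fps_exp (-1/2)) ^ (N + 2)) k"
proof -
  have "(expm1_quot * fps_exp (-1/2)) ^ (N + 2) = moment_egf N * fps_exp (- of_nat N / 2)"
    by (simp add: moment_egf_def power_mult_distrib fps_exp_power_mult fps_exp_add_mult [symmetric]
        mult.assoc field_simps)
  then show ?thesis
    by (simp add: Eprime_def poly_moment_poly egf_coeff_mult_exp)
qed

theorem theorem3p10:
  shows "\<exists>E :: nat \<Rightarrow> rat poly.
    (\<forall>k. degree (E k) = k) \<and>
    (\<forall>k d. k \<le> d + 1 \<longrightarrow> moment_X k d = poly (E k) (of_nat d)) \<and>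
    (\<forall>d::nat. Abs_fps (\<lambda>k. poly (E k) (of_nat d) / fact k)
        = ((fps_exp 1 - 1) / fps_X) ^ (d + 2) * fps_exp (-1)) \<and>
    (\<forall>a b k :: nat. Eprime E k (of_nat (a + b + 2))
        = (\<Sum>i\<le>k. of_nat (k choose i) * Eprime E i (of_nat a) * Eprime E (k - i) (of_nat b)))"
proof (intro exI [of _ moment_poly] conjI allI impI)
  fix k d :: nat
  show "degree (moment_poly k) = k"
    by (rule degree_moment_poly)
  assume "k \<le> d + 1"
  then show "moment_X k d = poly (moment_poly k) (of_nat d)"
    by (simp add: moment_X_eq_egf_coeff poly_moment_poly)
next
  fix d :: nat
  show "Abs_fps (\<lambda>k. poly (moment_poly k) (of_nat d) / fact k)
      = ((fps_exp 1 - 1) / fps_X) ^ (d + 2) * fps_exp (-1)"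
    by (simp add: poly_moment_poly Abs_fps_egf_coeff moment_egf_def expm1_quot_def)
next
  fix a b k :: nat
  show "Eprime moment_poly k (of_nat (a + b + 2))
      = (\<Sum>i\<le>k. of_nat (k choose i) * Eprime moment_poly i (of_nat a) * Eprime moment_poly (k - i) (of_nat b))"
    unfolding Eprime_moment_poly egf_coeff_mult [symmetric] power_add [symmetric]
    by (simp add: algebra_simps)
qed

end
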